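(* Let $\langle W,\varphi,(Y,\mathbb S,\sigma)\rangle$ be a monotone one-dimensional cocycle with skew-product system $(X,\mathbb S_+,\pi)$, $h=\mathrm{pr}_2$, and $\tau\in\mathbb S_+$, $\tau>0$. Assume: (1) $u_1<u_2$ implies $\varphi(k\tau,u_1,y)<\varphi(k\tau,u_2,y)$ for all $k\in\mathbb N$, $y\in Y$; (2) $x_0\in X$ has precompact semi-trajectory; (3) $y_0:=h(x_0)$ is asymptotically $\tau$-periodic, with $q:=\lim_{k\to\infty}\sigma(k\tau,y_0)$; (4) the $\tau$-periodic points of $(X,\mathbb S_+,\pi)$ in the fibre $X_q=W\times\{q\}$ are isolated, i.e. for every $u$ with $\varphi(\tau,u,q)=u$ there is $\delta>0$ such that no $u'\neq u$ with $|u'-u|<\delta$ satisfies $\varphi(\tau,u',q)=u'$. Then $x_0$ is asymptotically $\tau$-periodic, i.e. there is a $\tau$-periodic point $p\in X$ with $\rho(\pi(t,x_0),\pi(t,p))\to0$ as $t\to+\infty$.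
   Context: $\mathbb S=\mathbb R$ or $\mathbb Z$, $\mathbb S_+=\{t\in\mathbb S:t\ge0\}$. $(Y,\mathbb S,\sigma)$ is a two-sided dynamical system on a complete metric space; $y_0$ is asymptotically $\tau$-periodic if there is $q$ with $\sigma(\tau,q)=q$ and $\rho(\sigma(t,y_0),\sigma(t,q))\to0$. $W\subseteq\mathbb R$ is an interval; a monotone cocycle is a continuous $\varphi:\mathbb S_+\times W\times Y\to W$ with $\varphi(0,u,y)=u$, $\varphi(t+s,u,y)=\varphi(t,\varphi(s,u,y),\sigma(s,y))$ and $u_1\le u_2\Rightarrow\varphi(t,u_1,y)\le\varphi(t,u_2,y)$. Skew-product: $X=W\times Y$, $\pi(t,(u,y))=(\varphi(t,u,y),\sigma(t,y))$; a point $p$ is $\tau$-periodic if $\pi(\tau,p)=p$. *)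

theory Defs
  imports "HOL-Analysis.Analysis"
begin

definition time_set :: "real set \<Rightarrow> bool" where
  "time_set T \<longleftrightarrow> T = UNIV \<or> T = \<int>"

definition nonneg_times :: "real set \<Rightarrow> real set" where
  "nonneg_times T = {t \<in> T. 0 \<le> t}"

definition dyn_system :: "real set \<Rightarrow> (real \<Rightarrow> 'y::metric_space \<Rightarrow> 'y) \<Rightarrow> bool" where
  "dyn_system T \<sigma> \<longleftrightarrow>
     time_set T \<and>
     continuous_on (T \<times> UNIV) (\<lambda>(t, y). \<sigma> t y) \<and>
     (\<forall>y. \<sigma> 0 y = y) \<and>
     (\<forall>t\<in>T. \<forall>s\<in>T. \<forall>y. \<sigma> (t + s) y = \<sigma> t (\<sigma> s y))"

definition monotone_cocycle ::
  "real set \<Rightarrow> real set \<Rightarrow> (real \<Rightarrow> real \<Rightarrow> 'y::metric_space \<Rightarrow> real)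
     \<Rightarrow> (real \<Rightarrow> 'y \<Rightarrow> 'y) \<Rightarrow> bool" where
  "monotone_cocycle T W \<phi> \<sigma> \<longleftrightarrow>
     dyn_system T \<sigma> \<and> is_interval W \<and>
     continuous_on (nonneg_times T \<times> W \<times> UNIV) (\<lambda>(t, u, y). \<phi> t u y) \<and>
     (\<forall>t\<in>nonneg_times T. \<forall>u\<in>W. \<forall>y. \<phi> t u y \<in> W) \<and>
     (\<forall>u\<in>W. \<forall>y. \<phi> 0 u y = u) \<and>
     (\<forall>t\<in>nonneg_times T. \<forall>s\<in>nonneg_times T. \<forall>u\<in>W. \<forall>y.
        \<phi> (t + s) u y = \<phi> t (\<phi> s u y) (\<sigma> s y)) \<and>
     (\<forall>t\<in>nonneg_times T. \<forall>u1\<in>W. \<forall>u2\<in>W. \<forall>y.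
        u1 \<le> u2 \<longrightarrow> \<phi> t u1 y \<le> \<phi> t u2 y)"

definition skew_product ::
  "(real \<Rightarrow> real \<Rightarrow> 'y \<Rightarrow> real) \<Rightarrow> (real \<Rightarrow> 'y \<Rightarrow> 'y) \<Rightarrow> real \<Rightarrow> real \<times> 'y \<Rightarrow> real \<times> 'y" where
  "skew_product \<phi> \<sigma> t x = (\<phi> t (fst x) (snd x), \<sigma> t (snd x))"

definition time_at_top :: "real set \<Rightarrow> real filter" where
  "time_at_top T = inf at_top (principal T)"

definition asymptotically_periodic ::
  "real set \<Rightarrow> 'z set \<Rightarrow> (real \<Rightarrow> 'z::metric_space \<Rightarrow> 'z) \<Rightarrow> real \<Rightarrow> 'z \<Rightarrow> bool" where
  "asymptotically_periodic T Z f \<tau> z0 \<longleftrightarrow>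
     (\<exists>p\<in>Z. f \<tau> p = p \<and> ((\<lambda>t. dist (f t z0) (f t p)) \<longlongrightarrow> 0) (time_at_top T))"

text \<open>Precompact positive semi-trajectory in X = W \<times> Y: its closure in X is compact,
  equivalently the ambient closure is compact and contained in X.\<close>

definition precompact_semitrajectory ::
  "real set \<Rightarrow> ('x::metric_space) set \<Rightarrow> (real \<Rightarrow> 'x \<Rightarrow> 'x) \<Rightarrow> 'x \<Rightarrow> bool" where
  "precompact_semitrajectory T X f x0 \<longleftrightarrow>
     (let Orb = (\<lambda>t. f t x0) ` nonneg_times T in compact (closure Orb) \<and> closure Orb \<subseteq> X)"

end

theory Submission
  imports Defs
begin

text \<open>Sample the skew-product flow at the times \<open>k\<tau>\<close>. The fibre coordinate \<open>u\<^sub>k\<close> of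
  \<open>\<pi>(k\<tau>, x\<^sub>0)\<close> satisfies \<open>u\<^sub>k\<^sub>+\<^sub>1 = \<phi>(\<tau>, u\<^sub>k, \<sigma>(k\<tau>, y\<^sub>0))\<close>, a recursion by monotone maps
  converging pointwise to the period map \<open>P = \<phi>(\<tau>, \<cdot>, q)\<close>. If \<open>u\<^sub>k\<close> oscillated, the
  oscillation interval would contain a point \<open>m\<close> with \<open>P m \<noteq> m\<close>, because fixed points of
  \<open>P\<close> are isolated; but then \<open>m\<close> is eventually a barrier the orbit crosses in one direction
  only, so \<open>u\<^sub>k\<close> ends up on one side of \<open>m\<close>. Hence \<open>\<pi>(k\<tau>, x\<^sub>0) \<rightarrow> p = (L, q)\<close>, \<open>p\<close> is
  \<open>\<tau>\<close>-periodic by continuity, and uniform continuity of the flow on \<open>[0, \<tau>]\<close> times the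
  closure of the semi-trajectory spreads the convergence to all times.\<close>

lemma bounded_not_convergent_oscillates:
  fixes u :: "nat \<Rightarrow> real"
  assumes "bounded (range u)" and "\<not> convergent u"
  obtains a b where "a < b"
    and "\<And>m. m \<in> {a..b} \<Longrightarrow> (\<exists>\<^sub>F k in sequentially. u k < m) \<and> (\<exists>\<^sub>F k in sequentially. m < u k)"
proof -
  define A where "A = liminf (\<lambda>k. ereal (u k))"
  define B where "B = limsup (\<lambda>k. ereal (u k))"
  obtain R where R: "\<And>k. \<bar>u k\<bar> \<le> R"
    using assms(1) by (auto simp: bounded_iff)
  then have "ereal (-R) \<le> A"
    unfolding A_def by (intro Liminf_bounded always_eventually) (metis abs_le_iff ereal_less_eq(3) minus_le_iff)
  moreover have "B \<le> ereal R"
    unfolding B_def using R by (intro Limsup_bounded always_eventually) (metis abs_le_iff ereal_less_eq(3))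
  moreover have "A \<le> B"
    unfolding A_def B_def by (rule Liminf_le_Limsup) simp
  moreover have "A \<noteq> B"
  proof
    assume "A = B"
    with \<open>ereal (-R) \<le> A\<close> \<open>B \<le> ereal R\<close> obtain L where "A = ereal L" "B = ereal L"
      by (cases A) auto
    then have "u \<longlonglongrightarrow> L"
      by (intro limsup_le_liminf_real) (simp_all add: A_def B_def)
    with assms(2) show False
      by (auto simp: convergent_def)
  qed
  ultimately have "A < B" by simp
  then obtain a' where a': "A < ereal a'" "ereal a' < B"
    using ereal_dense2 by blast
  then obtain b where b: "ereal a' < ereal b" "ereal b < B"
    using ereal_dense2 by blast
  show ?thesis
  proof (rule that)
    show "a' < b" using b by simp
    fix m assume m: "m \<in> {a'..b}"
    have "\<not> (\<forall>\<^sub>F k in sequentially. m \<le> u k)"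
    proof
      assume "\<forall>\<^sub>F k in sequentially. m \<le> u k"
      then have "ereal m \<le> A"
        unfolding A_def by (intro Liminf_bounded) (auto elim: eventually_mono)
      moreover have "A < ereal m"
        using a' m by (meson atLeastAtMost_iff ereal_less_eq(3) order_less_le_trans)
      ultimately show False by simp
    qed
    moreover have "\<not> (\<forall>\<^sub>F k in sequentially. u k \<le> m)"
    proof
      assume "\<forall>\<^sub>F k in sequentially. u k \<le> m"
      then have "B \<le> ereal m"
        unfolding B_def by (intro Limsup_bounded) (auto elim: eventually_mono)
      moreover have "ereal m < B"
        using b m by (meson atLeastAtMost_iff ereal_less_eq(3) order_le_less_trans)
      ultimately show False by simp
    qed
    ultimately show "(\<exists>\<^sub>F k in sequentially. u k < m) \<and> (\<exists>\<^sub>F k in sequentially. m < u k)"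
      by (simp add: not_eventually not_le)
  qed
qed

lemma monotone_recursion_stays_below:
  fixes f :: "nat \<Rightarrow> real \<Rightarrow> real"
  assumes mono: "\<And>k. mono_on W (f k)" and rec: "\<And>k. u (Suc k) = f k (u k)"
    and uW: "\<And>k. u k \<in> W" and m: "m \<in> W"
    and below: "\<And>k. k \<ge> k0 \<Longrightarrow> f k m \<le> m" and start: "u k0 \<le> m" and "k0 \<le> k"
  shows "u k \<le> m"
  using \<open>k0 \<le> k\<close>
proof (induction k rule: dec_induct)
  case base then show ?case using start .
next
  case (step k)
  have "u (Suc k) \<le> f k m"
    unfolding rec using mono uW m step.IH by (rule mono_onD)
  also have "\<dots> \<le> m" using below step.hyps by simp
  finally show ?case .
qed

lemma monotone_recursion_stays_above:
  fixes f :: "nat \<Rightarrow> real \<Rightarrow> real"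
  assumes mono: "\<And>k. mono_on W (f k)" and rec: "\<And>k. u (Suc k) = f k (u k)"
    and uW: "\<And>k. u k \<in> W" and m: "m \<in> W"
    and above: "\<And>k. k \<ge> k0 \<Longrightarrow> m \<le> f k m" and start: "m \<le> u k0" and "k0 \<le> k"
  shows "m \<le> u k"
  using \<open>k0 \<le> k\<close>
proof (induction k rule: dec_induct)
  case base then show ?case using start .
next
  case (step k)
  have "m \<le> f k m" using above step.hyps by simp
  also have "\<dots> \<le> u (Suc k)"
    unfolding rec using mono m uW step.IH by (rule mono_onD)
  finally show ?case .
qed

text \<open>A point that the limit map moves down (up) is eventually a barrier the orbit
  cannot cross upwards (downwards), so the orbit ends up on one side of it.\<close>

lemma monotone_recursion_eventually_one_side:
  fixes f :: "nat \<Rightarrow> real \<Rightarrow> real"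
  assumes mono: "\<And>k. mono_on W (f k)" and rec: "\<And>k. u (Suc k) = f k (u k)"
    and uW: "\<And>k. u k \<in> W" and m: "m \<in> W"
    and lim: "(\<lambda>k. f k m) \<longlonglongrightarrow> P m" and moved: "P m \<noteq> m"
  shows "(\<forall>\<^sub>F k in sequentially. u k \<le> m) \<or> (\<forall>\<^sub>F k in sequentially. m \<le> u k)"
proof (cases "P m < m")
  case True
  have "\<forall>\<^sub>F k in sequentially. f k m < m"
    using lim True by (rule order_tendstoD(2))
  then obtain N where N: "\<And>k. k \<ge> N \<Longrightarrow> f k m \<le> m"
    unfolding eventually_sequentially using less_imp_le by blast
  show ?thesis
  proof (cases "\<exists>k0\<ge>N. u k0 \<le> m")
    case True
    then obtain k0 where "k0 \<ge> N" "u k0 \<le> m" by blast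
    then have "\<forall>k\<ge>k0. u k \<le> m"
      using monotone_recursion_stays_below[of W f u m k0] mono rec uW m N by simp
    then show ?thesis by (auto simp: eventually_sequentially)
  next
    case False
    then have "\<forall>k\<ge>N. m \<le> u k" by auto
    then show ?thesis unfolding eventually_sequentially by blast
  qed
next
  case False
  with moved have "m < P m" by simp
  have "\<forall>\<^sub>F k in sequentially. m < f k m"
    using lim \<open>m < P m\<close> by (rule order_tendstoD(1))
  then obtain N where N: "\<And>k. k \<ge> N \<Longrightarrow> m \<le> f k m"
    unfolding eventually_sequentially using less_imp_le by blast
  show ?thesis
  proof (cases "\<exists>k0\<ge>N. m \<le> u k0")
    case True
    then obtain k0 where "k0 \<ge> N" "m \<le> u k0" by blast
    then have "\<forall>k\<ge>k0. m \<le> u k"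
      using monotone_recursion_stays_above[of W f u m k0] mono rec uW m N by simp
    then show ?thesis by (auto simp: eventually_sequentially)
  next
    case False
    then have "\<forall>k\<ge>N. u k \<le> m" by auto
    then show ?thesis unfolding eventually_sequentially by blast
  qed
qed

lemma monotone_recursion_convergent:
  fixes f :: "nat \<Rightarrow> real \<Rightarrow> real"
  assumes W: "is_interval W" and mono: "\<And>k. mono_on W (f k)"
    and rec: "\<And>k. u (Suc k) = f k (u k)" and uW: "\<And>k. u k \<in> W"
    and bdd: "bounded (range u)"
    and lim: "\<And>m. m \<in> W \<Longrightarrow> (\<lambda>k. f k m) \<longlonglongrightarrow> P m"
    and isolated: "\<And>m. m \<in> W \<Longrightarrow> P m = m \<Longrightarrow>
                     \<exists>\<delta>>0. \<forall>m'\<in>W. m' \<noteq> m \<and> \<bar>m' - m\<bar> < \<delta> \<longrightarrow> P m' \<noteq> m'"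
  shows "convergent u"
proof (rule ccontr)
  assume "\<not> convergent u"
  then obtain a b where "a < b" and osc:
    "\<And>m. m \<in> {a..b} \<Longrightarrow> (\<exists>\<^sub>F k in sequentially. u k < m) \<and> (\<exists>\<^sub>F k in sequentially. m < u k)"
    using bdd bounded_not_convergent_oscillates by blast
  have "\<exists>\<^sub>F k in sequentially. u k < a" "\<exists>\<^sub>F k in sequentially. b < u k"
    using osc[of a] osc[of b] \<open>a < b\<close> by auto
  then obtain i j where "u i < a" "b < u j"
    by (metis frequently_ex)
  then have abW: "{a..b} \<subseteq> W"
    using W uW[of i] uW[of j] unfolding is_interval_1 by (meson atLeastAtMost_iff less_imp_le order_trans subsetI)
  obtain m where m: "m \<in> {a..b}" "P m \<noteq> m"
  proof (cases "P a = a")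
    case True
    have "a \<in> W" using abW \<open>a < b\<close> by auto
    then obtain \<delta> where "\<delta> > 0" and \<delta>: "\<forall>m'\<in>W. m' \<noteq> a \<and> \<bar>m' - a\<bar> < \<delta> \<longrightarrow> P m' \<noteq> m'"
      using isolated True by blast
    define m where "m = a + min (\<delta> / 2) (b - a)"
    have "m \<in> {a..b}" "m \<noteq> a" "\<bar>m - a\<bar> < \<delta>"
      using \<open>\<delta> > 0\<close> \<open>a < b\<close> by (auto simp: m_def)
    with that \<delta> abW show ?thesis by blast
  qed (use \<open>a < b\<close> in force)
  have "m \<in> W" using m(1) abW by blast
  with monotone_recursion_eventually_one_side[of W f u m P] mono rec uW lim m(2) osc[OF m(1)]
  show False
    by (auto simp: frequently_def not_less)
qed

lemma time_set_closed: "time_set T \<Longrightarrow> closed T"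
  by (auto simp: time_set_def closed_Ints)

lemma time_set_diff: "time_set T \<Longrightarrow> s \<in> T \<Longrightarrow> t \<in> T \<Longrightarrow> s - t \<in> T"
  by (auto simp: time_set_def)

lemma time_set_of_nat_mult: "time_set T \<Longrightarrow> \<tau> \<in> T \<Longrightarrow> real k * \<tau> \<in> T"
  by (auto simp: time_set_def)

lemma time_set_floor_decomposition:
  assumes T: "time_set T" "\<tau> \<in> T" "\<tau> > 0" and t: "t \<in> T" "t \<ge> 0"
  obtains k :: nat and s where "s \<in> {0..\<tau>} \<inter> T" "t = s + real k * \<tau>"
proof -
  define k where "k = nat \<lfloor>t / \<tau>\<rfloor>"
  have "real k = of_int \<lfloor>t / \<tau>\<rfloor>"
    using t T by (simp add: k_def)
  then have "real k \<le> t / \<tau>" "t / \<tau> < real k + 1"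
    by linarith+
  moreover have "t - real k * \<tau> \<in> T"
    using T t by (intro time_set_diff time_set_of_nat_mult)
  ultimately have "t - real k * \<tau> \<in> {0..\<tau>} \<inter> T"
    using T by (simp add: field_simps)
  then show ?thesis
    using that[of "t - real k * \<tau>" k] by simp
qed

text \<open>The flow is uniformly continuous on the compact set of times \<open>[0, \<tau>] \<inter> T\<close>, so
  closeness at the times \<open>k\<tau>\<close> propagates to the whole following period.\<close>

lemma tendsto_dist_time_at_top_of_multiples:
  fixes f :: "real \<Rightarrow> 'x::metric_space \<Rightarrow> 'x"
  assumes T: "time_set T" "\<tau> \<in> T" "\<tau> > 0"
    and K: "compact K" "continuous_on (({0..\<tau>} \<inter> T) \<times> K) (\<lambda>(t, x). f t x)"
    and orbit: "\<And>k. f (real k * \<tau>) x \<in> K" and "p \<in> K"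
    and shift: "\<And>s k. s \<in> {0..\<tau>} \<inter> T \<Longrightarrow> f (s + real k * \<tau>) x = f s (f (real k * \<tau>) x)"
    and periodic: "\<And>s k. s \<in> {0..\<tau>} \<inter> T \<Longrightarrow> f (s + real k * \<tau>) p = f s p"
    and conv: "(\<lambda>k. f (real k * \<tau>) x) \<longlonglongrightarrow> p"
  shows "((\<lambda>t. dist (f t x) (f t p)) \<longlongrightarrow> 0) (time_at_top T)"
  unfolding tendsto_iff
proof (intro allI impI)
  fix e :: real assume "e > 0"
  have "compact ({0..\<tau>} \<inter> T)"
    using T by (intro compact_Int_closed time_set_closed) auto
  with K have "uniformly_continuous_on (({0..\<tau>} \<inter> T) \<times> K) (\<lambda>(t, x). f t x)"
    by (intro compact_uniformly_continuous compact_Times) auto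
  then obtain d where "d > 0" and d: "\<forall>a\<in>({0..\<tau>} \<inter> T) \<times> K. \<forall>b\<in>({0..\<tau>} \<inter> T) \<times> K.
      dist b a < d \<longrightarrow> dist ((\<lambda>(t, x). f t x) b) ((\<lambda>(t, x). f t x) a) < e"
    using \<open>e > 0\<close> unfolding uniformly_continuous_on_def by blast
  obtain N where N: "\<And>k. k \<ge> N \<Longrightarrow> dist (f (real k * \<tau>) x) p < d"
    using conv \<open>d > 0\<close> unfolding tendsto_iff eventually_sequentially by blast
  show "\<forall>\<^sub>F t in time_at_top T. dist (dist (f t x) (f t p)) 0 < e"
    unfolding time_at_top_def eventually_inf_principal eventually_at_top_linorder
  proof (intro exI allI impI)
    fix t assume t: "t \<ge> (real N + 1) * \<tau>" "t \<in> T"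
    have "0 \<le> (real N + 1) * \<tau>" using T by simp
    with t have "t \<ge> 0" by linarith
    then obtain k s where s: "s \<in> {0..\<tau>} \<inter> T" and ts: "t = s + real k * \<tau>"
      using time_set_floor_decomposition[OF T t(2)] by blast
    have "real N * \<tau> \<le> real k * \<tau>"
      using t s ts by (auto simp: algebra_simps)
    then have "k \<ge> N" using T by simp
    have "dist (f t x) (f t p) = dist (f s (f (real k * \<tau>) x)) (f s p)"
      using s by (simp add: ts shift periodic)
    also have "\<dots> < e"
      using d[rule_format, of "(s, p)" "(s, f (real k * \<tau>) x)"] s orbit \<open>p \<in> K\<close> N[OF \<open>k \<ge> N\<close>]
      by (simp add: dist_Pair_Pair)
    finally show "dist (dist (f t x) (f t p)) 0 < e" by simp
  qed
qed

lemma nonneg_times_of_nat_mult: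
  "time_set T \<Longrightarrow> \<tau> \<in> nonneg_times T \<Longrightarrow> real k * \<tau> \<in> nonneg_times T"
  by (simp add: nonneg_times_def time_set_of_nat_mult)

lemma continuous_on_fixed_point_of_convergent_orbit:
  fixes F :: "'a::metric_space \<Rightarrow> 'a"
  assumes "continuous_on X F" "\<And>k. x k \<in> X" "p \<in> X"
    and "\<And>k. x (Suc k) = F (x k)" and "x \<longlonglongrightarrow> p"
  shows "F p = p"
proof -
  have "(\<lambda>k. F (x k)) \<longlonglongrightarrow> F p"
    using assms(1,5,3) by (rule continuous_on_tendsto_compose) (simp add: assms(2))
  moreover have "(\<lambda>k. F (x k)) \<longlonglongrightarrow> p"
    using LIMSEQ_Suc[OF \<open>x \<longlonglongrightarrow> p\<close>] by (simp add: assms(4))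
  ultimately show ?thesis
    by (rule LIMSEQ_unique)
qed

context
  fixes T W :: "real set" and \<phi> :: "real \<Rightarrow> real \<Rightarrow> 'y::metric_space \<Rightarrow> real" and \<sigma>
  assumes coc: "monotone_cocycle T W \<phi> \<sigma>"
begin

lemma monotone_cocycle_time_set: "time_set T"
  using coc by (simp add: monotone_cocycle_def dyn_system_def)

lemma monotone_cocycle_mono_on: "t \<in> nonneg_times T \<Longrightarrow> mono_on W (\<lambda>u. \<phi> t u y)"
  using coc by (auto simp: monotone_cocycle_def intro: mono_onI)

lemma skew_product_zero: "x \<in> W \<times> UNIV \<Longrightarrow> skew_product \<phi> \<sigma> 0 x = x"
  using coc by (auto simp: monotone_cocycle_def dyn_system_def skew_product_def)

lemma skew_product_add:
  assumes "t \<in> nonneg_times T" "s \<in> nonneg_times T" "x \<in> W \<times> UNIV"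
  shows "skew_product \<phi> \<sigma> (t + s) x = skew_product \<phi> \<sigma> t (skew_product \<phi> \<sigma> s x)"
  using coc assms
  by (auto simp: monotone_cocycle_def dyn_system_def skew_product_def nonneg_times_def)

lemma skew_product_continuous:
  "continuous_on (nonneg_times T \<times> (W \<times> UNIV)) (\<lambda>(t, x). skew_product \<phi> \<sigma> t x)"
proof -
  have "(\<lambda>(t, x). skew_product \<phi> \<sigma> t x) = (\<lambda>z. ((\<lambda>(t, u, y). \<phi> t u y) z, (\<lambda>(t, y). \<sigma> t y) (fst z, snd (snd z))))"
    by (auto simp: fun_eq_iff skew_product_def)
  moreover have "continuous_on (nonneg_times T \<times> W \<times> UNIV) (\<lambda>(t, u, y). \<phi> t u y)"
    using coc by (simp add: monotone_cocycle_def)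
  moreover have "continuous_on (nonneg_times T \<times> W \<times> UNIV) (\<lambda>z. (\<lambda>(t, y). \<sigma> t y) (fst z, snd (snd z)))"
  proof (rule continuous_on_compose2[of "T \<times> UNIV"])
    show "continuous_on (T \<times> UNIV) (\<lambda>(t, y). \<sigma> t y)"
      using coc by (simp add: monotone_cocycle_def dyn_system_def)
  qed (auto simp: nonneg_times_def intro!: continuous_intros)
  ultimately show ?thesis
    by (simp add: continuous_on_Pair)
qed

lemma skew_product_continuous_at_time:
  assumes "t \<in> nonneg_times T"
  shows "continuous_on (W \<times> UNIV) (skew_product \<phi> \<sigma> t)"
proof -
  have "continuous_on (W \<times> UNIV) (\<lambda>x. (\<lambda>(t, x). skew_product \<phi> \<sigma> t x) (t, x))"
    using assms by (intro continuous_on_compose2[OF skew_product_continuous] continuous_intros) auto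
  then show ?thesis by simp
qed

lemma skew_product_Suc_mult:
  assumes "\<tau> \<in> nonneg_times T" "x \<in> W \<times> UNIV"
  shows "skew_product \<phi> \<sigma> (real (Suc k) * \<tau>) x = skew_product \<phi> \<sigma> \<tau> (skew_product \<phi> \<sigma> (real k * \<tau>) x)"
proof -
  have "real k * \<tau> \<in> nonneg_times T"
    using nonneg_times_of_nat_mult[OF monotone_cocycle_time_set assms(1)] .
  moreover have "real (Suc k) * \<tau> = \<tau> + real k * \<tau>"
    by (simp add: algebra_simps)
  ultimately show ?thesis
    using skew_product_add[OF assms(1) _ assms(2)] by simp
qed

lemma skew_product_periodic_multiple:
  assumes "\<tau> \<in> nonneg_times T" "p \<in> W \<times> UNIV" "skew_product \<phi> \<sigma> \<tau> p = p"
  shows "skew_product \<phi> \<sigma> (real k * \<tau>) p = p"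
proof (induction k)
  case 0
  show ?case using skew_product_zero assms by simp
next
  case (Suc k)
  have "skew_product \<phi> \<sigma> (real (Suc k) * \<tau>) p = skew_product \<phi> \<sigma> (real k * \<tau> + \<tau>) p"
    by (simp add: algebra_simps)
  also have "\<dots> = p"
    using assms Suc.IH skew_product_add nonneg_times_of_nat_mult monotone_cocycle_time_set by simp
  finally show ?case .
qed

lemma skew_product_iterates_convergent:
  assumes tau: "\<tau> \<in> nonneg_times T"
    and K: "compact K" "K \<subseteq> W \<times> UNIV" and orbit: "\<And>k. skew_product \<phi> \<sigma> (real k * \<tau>) x0 \<in> K"
    and x0: "x0 \<in> W \<times> UNIV"
    and q: "(\<lambda>k. \<sigma> (real k * \<tau>) (snd x0)) \<longlonglongrightarrow> q"
    and isolated: "\<And>u. u \<in> W \<Longrightarrow> \<phi> \<tau> u q = u \<Longrightarrow>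
                     \<exists>\<delta>>0. \<forall>u'\<in>W. u' \<noteq> u \<and> \<bar>u' - u\<bar> < \<delta> \<longrightarrow> \<phi> \<tau> u' q \<noteq> u'"
  obtains L where "(\<lambda>k. skew_product \<phi> \<sigma> (real k * \<tau>) x0) \<longlonglongrightarrow> (L, q)"
proof -
  define u where "u k = \<phi> (real k * \<tau>) (fst x0) (snd x0)" for k
  define y where "y k = \<sigma> (real k * \<tau>) (snd x0)" for k
  have x_eq: "skew_product \<phi> \<sigma> (real k * \<tau>) x0 = (u k, y k)" for k
    by (simp add: skew_product_def u_def y_def)
  have "u (Suc k) = \<phi> \<tau> (u k) (y k)" for k
    using skew_product_Suc_mult[OF tau x0, of k] unfolding x_eq by (simp add: skew_product_def)
  moreover have "u k \<in> W" for k
    using orbit[of k] K(2) by (auto simp: x_eq)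
  moreover have "bounded (range u)"
  proof -
    have "range u \<subseteq> fst ` K"
      using orbit by (metis (no_types, lifting) fst_conv image_eqI image_subsetI x_eq)
    then show ?thesis
      using K(1) by (metis bounded_fst bounded_subset compact_imp_bounded)
  qed
  moreover have "(\<lambda>k. \<phi> \<tau> m (y k)) \<longlonglongrightarrow> \<phi> \<tau> m q" if "m \<in> W" for m
  proof -
    have "(\<lambda>k. (m, y k)) \<longlonglongrightarrow> (m, q)"
      using q by (simp add: y_def tendsto_Pair)
    then have "(\<lambda>k. skew_product \<phi> \<sigma> \<tau> (m, y k)) \<longlonglongrightarrow> skew_product \<phi> \<sigma> \<tau> (m, q)"
      by (rule continuous_on_tendsto_compose[OF skew_product_continuous_at_time[OF tau]]) (simp_all add: that)
    then show ?thesis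
      using tendsto_fst by (fastforce simp: skew_product_def)
  qed
  ultimately have "convergent u"
    using monotone_cocycle_mono_on[OF tau] isolated coc
    by (intro monotone_recursion_convergent[where f = "\<lambda>k v. \<phi> \<tau> v (y k)" and P = "\<lambda>v. \<phi> \<tau> v q"])
      (auto simp: monotone_cocycle_def)
  then obtain L where "u \<longlonglongrightarrow> L"
    by (auto simp: convergent_def)
  with q show ?thesis
    using that[of L] by (simp add: x_eq y_def tendsto_Pair)
qed

lemma skew_product_tendsto_dist_of_convergent_iterates:
  assumes tau: "\<tau> \<in> T" "\<tau> > 0"
    and K: "compact K" "K \<subseteq> W \<times> UNIV" and orbit: "\<And>k. skew_product \<phi> \<sigma> (real k * \<tau>) x0 \<in> K"
    and "p \<in> K" and periodic: "skew_product \<phi> \<sigma> \<tau> p = p" and x0: "x0 \<in> W \<times> UNIV"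
    and conv: "(\<lambda>k. skew_product \<phi> \<sigma> (real k * \<tau>) x0) \<longlonglongrightarrow> p"
  shows "((\<lambda>t. dist (skew_product \<phi> \<sigma> t x0) (skew_product \<phi> \<sigma> t p)) \<longlongrightarrow> 0) (time_at_top T)"
proof (rule tendsto_dist_time_at_top_of_multiples[where f = "skew_product \<phi> \<sigma>" and x = x0,
      OF monotone_cocycle_time_set tau K(1) _ orbit \<open>p \<in> K\<close> _ _ conv])
  have "{0..\<tau>} \<inter> T \<subseteq> nonneg_times T"
    by (auto simp: nonneg_times_def)
  then show "continuous_on (({0..\<tau>} \<inter> T) \<times> K) (\<lambda>(t, x). skew_product \<phi> \<sigma> t x)"
    using K(2) by (intro continuous_on_subset[OF skew_product_continuous]) auto
  fix s k assume "s \<in> {0..\<tau>} \<inter> T"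
  then have s: "s \<in> nonneg_times T"
    by (simp add: nonneg_times_def)
  have tau': "\<tau> \<in> nonneg_times T"
    using tau by (simp add: nonneg_times_def)
  then have k: "real k * \<tau> \<in> nonneg_times T"
    using nonneg_times_of_nat_mult[OF monotone_cocycle_time_set] by blast
  show "skew_product \<phi> \<sigma> (s + real k * \<tau>) x0 = skew_product \<phi> \<sigma> s (skew_product \<phi> \<sigma> (real k * \<tau>) x0)"
    using skew_product_add[OF s k x0] .
  have "p \<in> W \<times> UNIV"
    using \<open>p \<in> K\<close> K(2) by blast
  then show "skew_product \<phi> \<sigma> (s + real k * \<tau>) p = skew_product \<phi> \<sigma> s p"
    using skew_product_add[OF s k] skew_product_periodic_multiple[OF tau' _ periodic] by simp
qed

end

theorem mainTheorem10:
  fixes T W :: "real set"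
    and \<phi> :: "real \<Rightarrow> real \<Rightarrow> 'y::complete_space \<Rightarrow> real"
    and \<sigma> :: "real \<Rightarrow> 'y \<Rightarrow> 'y"
    and \<tau> :: real and x0 :: "real \<times> 'y" and q :: 'y
  assumes coc: "monotone_cocycle T W \<phi> \<sigma>"
    and tau: "\<tau> \<in> T" "\<tau> > 0"
    and strict: "\<And>(k::nat) u1 u2 y. u1 \<in> W \<Longrightarrow> u2 \<in> W \<Longrightarrow> u1 < u2 \<Longrightarrow>
                   \<phi> (real k * \<tau>) u1 y < \<phi> (real k * \<tau>) u2 y"
    and x0: "x0 \<in> W \<times> UNIV"
    and precomp: "precompact_semitrajectory T (W \<times> UNIV) (skew_product \<phi> \<sigma>) x0"
    and y0: "asymptotically_periodic T UNIV \<sigma> \<tau> (snd x0)"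
    and q: "(\<lambda>k::nat. \<sigma> (real k * \<tau>) (snd x0)) \<longlonglongrightarrow> q"
    and isolated: "\<And>u. u \<in> W \<Longrightarrow> \<phi> \<tau> u q = u \<Longrightarrow>
                     \<exists>\<delta>>0. \<forall>u'\<in>W. u' \<noteq> u \<and> \<bar>u' - u\<bar> < \<delta> \<longrightarrow> \<phi> \<tau> u' q \<noteq> u'"
  shows "asymptotically_periodic T (W \<times> UNIV) (skew_product \<phi> \<sigma>) \<tau> x0"
proof -
  let ?\<pi> = "skew_product \<phi> \<sigma>"
  define K where "K = closure ((\<lambda>t. ?\<pi> t x0) ` nonneg_times T)"
  have T: "time_set T" and tau': "\<tau> \<in> nonneg_times T"
    using monotone_cocycle_time_set[OF coc] tau by (auto simp: nonneg_times_def)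
  have K: "compact K" "K \<subseteq> W \<times> UNIV"
    using precomp by (simp_all add: precompact_semitrajectory_def Let_def K_def)
  have orbit: "?\<pi> (real k * \<tau>) x0 \<in> K" for k
    unfolding K_def using nonneg_times_of_nat_mult[OF T tau'] by (intro closure_subset[THEN subsetD] imageI)
  obtain L where conv: "(\<lambda>k. ?\<pi> (real k * \<tau>) x0) \<longlonglongrightarrow> (L, q)"
    using skew_product_iterates_convergent[OF coc tau' K orbit x0 q isolated] .
  define p where "p = (L, q)"
  have "p \<in> K"
    unfolding p_def using closed_sequentially[OF _ orbit conv] by (simp add: K_def)
  have periodic: "?\<pi> \<tau> p = p"
    using K orbit \<open>p \<in> K\<close> conv skew_product_Suc_mult[OF coc tau' x0]
    by (intro continuous_on_fixed_point_of_convergent_orbit[OF skew_product_continuous_at_time[OF coc tau']])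
      (auto simp: p_def)
  have "((\<lambda>t. dist (?\<pi> t x0) (?\<pi> t p)) \<longlongrightarrow> 0) (time_at_top T)"
    using skew_product_tendsto_dist_of_convergent_iterates[OF coc tau K orbit \<open>p \<in> K\<close> periodic x0]
      conv by (simp add: p_def)
  with \<open>p \<in> K\<close> K(2) periodic show ?thesis
    unfolding asymptotically_periodic_def by blast
qed

end
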